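(* In the setting of the blurring mean-shift iteration with $f$ PDD and fixed positive weights, let $C_1=\bigcap_{t\ge0}C_1^{(t)}$ where $C_1^{(t)}$ is the convex hull of $\{x_1^{(t)},\dots,x_N^{(t)}\}$. Suppose $i$ is an index such that $x_i^{(t)}\to v$ as $t\to\infty$ for some vertex $v$ of $C_1$. Then for every index $j$ such that $\lim_{t\to\infty}x_j^{(t)}\neq v$, we have $\lim_{t\to\infty}f(x_i^{(t)}-x_j^{(t)})=0$.
   Context: Setting: $x_1,\dots,x_N\in\mathbb{R}^p$, fixed weights $w_1,\dots,w_N>0$, and $f:\mathbb{R}^p\to[0,1]$ PDD, meaning: $f(u)=1$ iff $u=0$; $f(u)=\varphi(\|u\|)$ for some $\varphi:[0,\infty)\to[0,1]$; $\varphi$ is decreasing (non-increasing). The blurring mean-shift iteration is $x_i^{(0)}=x_i$ and $x_i^{(t+1)}=\frac{\sum_{j=1}^N f(x_i^{(t)}-x_j^{(t)})w_jx_j^{(t)}}{\sum_{j=1}^N f(x_i^{(t)}-x_j^{(t)})w_j}$. *)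

theory Defs
  imports "HOL-Analysis.Analysis"
begin

text \<open>Blurring mean-shift iteration on points indexed by 0..N-1.
  bms f w N x0 t i is the point x_i^(t).\<close>
primrec bms :: "('a::real_normed_vector \<Rightarrow> real) \<Rightarrow> (nat \<Rightarrow> real) \<Rightarrow> nat
    \<Rightarrow> (nat \<Rightarrow> 'a) \<Rightarrow> nat \<Rightarrow> nat \<Rightarrow> 'a" where
  "bms f w N x0 0 = x0"
| "bms f w N x0 (Suc t) =
     (\<lambda>i. (\<Sum>j<N. (f (bms f w N x0 t i - bms f w N x0 t j) * w j) *\<^sub>R bms f w N x0 t j)
          /\<^sub>R (\<Sum>j<N. f (bms f w N x0 t i - bms f w N x0 t j) * w j))"

definition PDD :: "('a::real_normed_vector \<Rightarrow> real) \<Rightarrow> bool" where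
  "PDD f \<longleftrightarrow> (\<forall>u. 0 \<le> f u \<and> f u \<le> 1) \<and> (\<forall>u. f u = 1 \<longleftrightarrow> u = 0) \<and>
     (\<exists>\<phi>::real \<Rightarrow> real. (\<forall>u. f u = \<phi> (norm u)) \<and>
        (\<forall>r s. 0 \<le> r \<longrightarrow> r \<le> s \<longrightarrow> \<phi> s \<le> \<phi> r))"

end

theory Submission
  imports Defs "HOL-Library.Infinite_Set"
begin

text \<open>One step of the iteration writes \<open>x\<^sub>i(t+1)\<close> as a convex combination
  \<open>\<alpha>\<^sub>t x\<^sub>j(t) + (1 - \<alpha>\<^sub>t) q\<^sub>t\<close> with \<open>q\<^sub>t\<close> in the current hull and
  \<open>\<alpha>\<^sub>t \<ge> f(x\<^sub>i(t) - x\<^sub>j(t)) w\<^sub>j / \<Sum>w\<close>. The hulls are nested and compact, so if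
  \<open>\<alpha>\<^sub>t\<close> stayed away from 0 along a subsequence, a further subsequence would exhibit
  the limit \<open>v\<close> of \<open>x\<^sub>i\<close> as a proper convex combination of the limit \<open>u \<noteq> v\<close> of
  \<open>x\<^sub>j\<close> and a point of \<open>C\<^sub>1\<close>, contradicting that \<open>v\<close> is extreme in \<open>C\<^sub>1\<close>.\<close>

lemma weighted_mean_in_convex_hull:
  fixes y :: "'b \<Rightarrow> 'a::real_vector"
  assumes "finite A" "\<And>k. k \<in> A \<Longrightarrow> 0 \<le> a k" "0 < sum a A"
  shows "(\<Sum>k\<in>A. a k *\<^sub>R y k) /\<^sub>R sum a A \<in> convex hull (y ` A)"
proof -
  have "(\<Sum>k\<in>A. (a k / sum a A) *\<^sub>R y k) \<in> convex hull (y ` A)"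
  proof (rule convex_sum[OF assms(1) convex_convex_hull])
    show "(\<Sum>k\<in>A. a k / sum a A) = 1"
      using assms(3) by (simp add: sum_divide_distrib[symmetric])
    show "\<And>k. k \<in> A \<Longrightarrow> 0 \<le> a k / sum a A"
      using assms(2,3) by simp
    show "\<And>k. k \<in> A \<Longrightarrow> y k \<in> convex hull (y ` A)"
      by (simp add: hull_inc)
  qed
  then show ?thesis
    by (simp add: scaleR_sum_right divide_inverse_commute mult.commute)
qed

lemma weighted_mean_split_off:
  fixes y :: "'b \<Rightarrow> 'a::real_vector"
  assumes "finite A" "j \<in> A" "\<And>k. k \<in> A \<Longrightarrow> 0 \<le> a k" "0 < sum a A"
  obtains q where "q \<in> convex hull (y ` A)"
    and "(\<Sum>k\<in>A. a k *\<^sub>R y k) /\<^sub>R sum a A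
           = (a j / sum a A) *\<^sub>R y j + (1 - a j / sum a A) *\<^sub>R q"
proof -
  define B where "B = A - {j}"
  have split: "sum g A = g j + sum g B" for g :: "'b \<Rightarrow> 'c::comm_monoid_add"
    unfolding B_def using assms(1,2) by (rule sum.remove)
  have hull_B: "convex hull (y ` B) \<subseteq> convex hull (y ` A)"
    unfolding B_def by (intro hull_mono image_mono) auto
  have B_nonneg: "0 \<le> a k" if "k \<in> B" for k
    using assms(3) that by (simp add: B_def)
  show ?thesis
  proof (cases "sum a B = 0")
    case True
    then have "\<forall>k\<in>B. a k = 0"
      using B_nonneg assms(1) sum_nonneg_eq_0_iff[of B a] unfolding B_def by blast
    then have "(\<Sum>k\<in>A. a k *\<^sub>R y k) /\<^sub>R sum a A = (a j / sum a A) *\<^sub>R y j + (1 - a j / sum a A) *\<^sub>R y j"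
      using True assms(4) by (simp add: split[of a] split[of "\<lambda>k. a k *\<^sub>R y k"] algebra_simps)
    moreover have "y j \<in> convex hull (y ` A)"
      using assms(2) by (simp add: hull_inc)
    ultimately show ?thesis
      using that by blast
  next
    case False
    then have "0 < sum a B"
      using B_nonneg sum_nonneg by (metis order_le_less)
    define q where "q = (\<Sum>k\<in>B. a k *\<^sub>R y k) /\<^sub>R sum a B"
    have "q \<in> convex hull (y ` A)"
      using weighted_mean_in_convex_hull[OF _ B_nonneg \<open>0 < sum a B\<close>] hull_B assms(1)
      by (auto simp: q_def B_def)
    moreover have "1 - a j / sum a A = sum a B / sum a A"
      using split[of a] assms(4) by (simp add: field_simps)
    then have "(\<Sum>k\<in>A. a k *\<^sub>R y k) /\<^sub>R sum a A = (a j / sum a A) *\<^sub>R y j + (1 - a j / sum a A) *\<^sub>R q"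
      using False by (simp add: split[of "\<lambda>k. a k *\<^sub>R y k"] q_def scaleR_add_right divide_inverse_commute)
    ultimately show ?thesis by (rule that)
  qed
qed

lemma extreme_point_of_convex_combination:
  fixes v :: "'a::real_vector"
  assumes "v extreme_point_of K" "u \<in> K" "q \<in> K"
    and "v = a *\<^sub>R u + (1 - a) *\<^sub>R q" "0 < a" "a \<le> 1"
  shows "u = v"
proof (rule ccontr)
  assume "u \<noteq> v"
  have "a \<noteq> 1"
    using \<open>u \<noteq> v\<close> assms(4) by auto
  have "u \<noteq> q"
  proof
    assume "u = q"
    then have "v = u"
      using assms(4) by (simp flip: scaleR_left_distrib)
    with \<open>u \<noteq> v\<close> show False by simp
  qed
  have "v = (1 - (1 - a)) *\<^sub>R u + (1 - a) *\<^sub>R q"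
    using assms(4) by simp
  then have "v \<in> open_segment u q"
    unfolding in_segment using \<open>a \<noteq> 1\<close> \<open>u \<noteq> q\<close> assms(5,6)
    by (intro conjI exI[of _ "1 - a"]) simp_all
  then show False
    using assms(1-3) unfolding extreme_point_of_def by blast
qed

lemma LIMSEQ_in_Inter_decseq:
  assumes "decseq K" "\<And>t. closed (K t)"
    and "\<And>n. y n \<in> K (\<sigma> n)" "filterlim \<sigma> sequentially sequentially" "y \<longlonglongrightarrow> l"
  shows "l \<in> (\<Inter>t. K t)"
proof
  fix t
  have "\<forall>\<^sub>F n in sequentially. t \<le> \<sigma> n"
    using assms(4) by (simp add: filterlim_at_top)
  then have "\<forall>\<^sub>F n in sequentially. y n \<in> K t"
    by (rule eventually_mono) (meson assms(1,3) decseqD subsetD)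
  then show "l \<in> K t"
    by (rule Lim_in_closed_set[OF assms(2) _ trivial_limit_sequentially assms(5)])
qed

lemma convex_combination_weight_tendsto_zero:
  fixes K :: "nat \<Rightarrow> 'a::real_normed_vector set"
  assumes "decseq K" "\<And>t. compact (K t)" "v extreme_point_of (\<Inter>t. K t)"
    and "\<And>t. p t \<in> K t" "p \<longlonglongrightarrow> u" "u \<noteq> v"
    and "\<And>t. q t \<in> K t" "\<And>t. \<alpha> t \<in> {0..1}"
    and "(\<lambda>t. \<alpha> t *\<^sub>R p t + (1 - \<alpha> t) *\<^sub>R q t) \<longlonglongrightarrow> v"
  shows "\<alpha> \<longlonglongrightarrow> 0"
proof (rule ccontr)
  assume "\<not> \<alpha> \<longlonglongrightarrow> 0"
  then obtain e where "e > 0" and far: "\<not> (\<forall>\<^sub>F t in sequentially. dist (\<alpha> t) 0 < e)"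
    unfolding tendsto_iff by blast
  have "\<exists>\<^sub>F t in sequentially. e \<le> \<alpha> t"
    using far unfolding not_eventually by (rule frequently_elim1) (use assms(8) in \<open>simp add: dist_real_def\<close>)
  then have "infinite {t. e \<le> \<alpha> t}"
    unfolding cofinite_eq_sequentially[symmetric] frequently_cofinite .
  then obtain \<sigma> :: "nat \<Rightarrow> nat" where \<sigma>: "strict_mono \<sigma>" "\<forall>n. e \<le> \<alpha> (\<sigma> n)"
    using infinite_enumerate by blast
  have closed_K: "closed (K t)" for t
    using assms(2) by (rule compact_imp_closed)
  have "K t \<subseteq> K 0" for t
    using assms(1) by (simp add: decseq_def)
  then have "\<forall>n. (q (\<sigma> n), \<alpha> (\<sigma> n)) \<in> K 0 \<times> {e..1}"
    using assms(7,8) \<sigma>(2) by auto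
  then obtain l \<rho> where "l \<in> K 0 \<times> {e..1}" "strict_mono \<rho>"
    and lim: "((\<lambda>n. (q (\<sigma> n), \<alpha> (\<sigma> n))) \<circ> \<rho>) \<longlonglongrightarrow> l"
    by (rule seq_compactE[OF compact_imp_seq_compact[OF compact_Times[OF assms(2) compact_Icc]]])
  obtain q\<^sub>0 a\<^sub>0 where l: "l = (q\<^sub>0, a\<^sub>0)"
    by fastforce
  define \<tau> where "\<tau> = \<sigma> \<circ> \<rho>"
  have "strict_mono \<tau>"
    unfolding \<tau>_def using \<sigma>(1) \<open>strict_mono \<rho>\<close> by (rule strict_mono_o)
  have q_lim: "(q \<circ> \<tau>) \<longlonglongrightarrow> q\<^sub>0" and \<alpha>_lim: "(\<alpha> \<circ> \<tau>) \<longlonglongrightarrow> a\<^sub>0"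
    using tendsto_fst[OF lim] tendsto_snd[OF lim] by (simp_all add: l \<tau>_def o_def)
  have "u \<in> (\<Inter>t. K t)"
    using LIMSEQ_in_Inter_decseq[OF assms(1) closed_K assms(4) filterlim_ident assms(5)] .
  moreover have "q\<^sub>0 \<in> (\<Inter>t. K t)"
    using LIMSEQ_in_Inter_decseq[OF assms(1) closed_K _ filterlim_subseq[OF \<open>strict_mono \<tau>\<close>] q_lim]
      assms(7) by simp
  moreover have "v = a\<^sub>0 *\<^sub>R u + (1 - a\<^sub>0) *\<^sub>R q\<^sub>0"
  proof (rule LIMSEQ_unique)
    show "(\<lambda>n. \<alpha> (\<tau> n) *\<^sub>R p (\<tau> n) + (1 - \<alpha> (\<tau> n)) *\<^sub>R q (\<tau> n)) \<longlonglongrightarrow> v"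
      using LIMSEQ_subseq_LIMSEQ[OF assms(9) \<open>strict_mono \<tau>\<close>] by (simp add: o_def)
    show "(\<lambda>n. \<alpha> (\<tau> n) *\<^sub>R p (\<tau> n) + (1 - \<alpha> (\<tau> n)) *\<^sub>R q (\<tau> n)) \<longlonglongrightarrow> a\<^sub>0 *\<^sub>R u + (1 - a\<^sub>0) *\<^sub>R q\<^sub>0"
      using \<alpha>_lim q_lim LIMSEQ_subseq_LIMSEQ[OF assms(5) \<open>strict_mono \<tau>\<close>]
      by (intro tendsto_intros) (simp_all add: o_def)
  qed
  moreover have "0 < a\<^sub>0" "a\<^sub>0 \<le> 1"
    using \<open>l \<in> K 0 \<times> {e..1}\<close> \<open>e > 0\<close> by (auto simp: l)
  ultimately show False
    using extreme_point_of_convex_combination[OF assms(3)] assms(6) by blast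
qed

lemma PDD_at_0: "PDD f \<Longrightarrow> f 0 = 1"
  by (simp add: PDD_def)

lemma PDD_nonneg: "PDD f \<Longrightarrow> 0 \<le> f u"
  by (simp add: PDD_def)

lemma PDD_le_1: "PDD f \<Longrightarrow> f u \<le> 1"
  by (simp add: PDD_def)

lemma PDD_weight_sum_pos:
  fixes w :: "nat \<Rightarrow> real" and y :: "nat \<Rightarrow> 'a::real_normed_vector"
  assumes "PDD f" "\<forall>k<N. 0 < w k" "k < N"
  shows "0 < (\<Sum>j<N. f (y k - y j) * w j)"
proof -
  have "0 < f (y k - y k) * w k"
    using assms by (simp add: PDD_at_0)
  also have "\<dots> \<le> (\<Sum>j<N. f (y k - y j) * w j)"
    by (rule member_le_sum) (use assms in \<open>auto simp: PDD_nonneg less_imp_le\<close>)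
  finally show ?thesis .
qed

lemma bms_Suc_in_convex_hull:
  assumes "PDD f" "\<forall>k<N. 0 < w k" "k < N"
  shows "bms f w N x0 (Suc t) k \<in> convex hull (bms f w N x0 t ` {..<N})"
  using weighted_mean_in_convex_hull[OF _ _ PDD_weight_sum_pos[OF assms]] assms(1,2)
  by (simp add: PDD_nonneg less_imp_le)

lemma decseq_bms_convex_hull:
  assumes "PDD f" "\<forall>k<N. 0 < w k"
  shows "decseq (\<lambda>t. convex hull (bms f w N x0 t ` {..<N}))"
proof (rule decseq_SucI)
  fix t
  show "convex hull (bms f w N x0 (Suc t) ` {..<N}) \<subseteq> convex hull (bms f w N x0 t ` {..<N})"
    by (rule hull_minimal) (use bms_Suc_in_convex_hull[OF assms] in auto)
qed

lemma bms_Suc_split_off: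
  assumes "PDD f" "\<forall>k<N. 0 < w k" "i < N" "j < N"
  obtains \<alpha> q where "\<alpha> \<in> {0..1}" "q \<in> convex hull (bms f w N x0 t ` {..<N})"
    and "bms f w N x0 (Suc t) i = \<alpha> *\<^sub>R bms f w N x0 t j + (1 - \<alpha>) *\<^sub>R q"
    and "f (bms f w N x0 t i - bms f w N x0 t j) * w j \<le> \<alpha> * sum w {..<N}"
proof -
  define X where "X = bms f w N x0 t"
  define a where "a k = f (X i - X k) * w k" for k
  have a_nonneg: "0 \<le> a k" if "k < N" for k
    using assms(1,2) that unfolding a_def by (simp add: PDD_nonneg less_imp_le)
  have S_pos: "0 < sum a {..<N}"
    unfolding a_def using PDD_weight_sum_pos[OF assms(1-3)] .
  have a_le_S: "a j \<le> sum a {..<N}"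
    by (rule member_le_sum) (use a_nonneg assms(4) in auto)
  have S_le_W: "sum a {..<N} \<le> sum w {..<N}"
    unfolding a_def
    by (rule sum_mono) (use assms(1,2) in \<open>auto simp: PDD_nonneg PDD_le_1 less_imp_le intro: mult_left_le_one_le\<close>)
  obtain q where q: "q \<in> convex hull (X ` {..<N})"
    and split: "(\<Sum>k<N. a k *\<^sub>R X k) /\<^sub>R sum a {..<N}
                 = (a j / sum a {..<N}) *\<^sub>R X j + (1 - a j / sum a {..<N}) *\<^sub>R q"
    using weighted_mean_split_off[of "{..<N}" j a X] a_nonneg S_pos assms(4) by auto
  show ?thesis
  proof (rule that)
    show "a j / sum a {..<N} \<in> {0..1}"
      using a_nonneg[OF assms(4)] a_le_S S_pos by simp
    show "q \<in> convex hull (bms f w N x0 t ` {..<N})"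
      using q by (simp add: X_def)
    show "bms f w N x0 (Suc t) i = (a j / sum a {..<N}) *\<^sub>R bms f w N x0 t j + (1 - a j / sum a {..<N}) *\<^sub>R q"
      using split by (simp add: X_def a_def)
    have "a j = (a j / sum a {..<N}) * sum a {..<N}"
      using S_pos by simp
    also have "\<dots> \<le> (a j / sum a {..<N}) * sum w {..<N}"
      using S_le_W a_nonneg[OF assms(4)] S_pos by (intro mult_left_mono) simp_all
    finally show "f (bms f w N x0 t i - bms f w N x0 t j) * w j \<le> (a j / sum a {..<N}) * sum w {..<N}"
      by (simp add: a_def X_def)
  qed
qed

theorem lemma3:
  fixes f :: "'a::euclidean_space \<Rightarrow> real" and w :: "nat \<Rightarrow> real"
    and x0 :: "nat \<Rightarrow> 'a" and N i j :: nat and v u :: 'a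
  assumes "PDD f"
    and "\<forall>k<N. w k > 0"
    and "i < N" and "j < N"
    and "v extreme_point_of (\<Inter>t. convex hull ((\<lambda>k. bms f w N x0 t k) ` {..<N}))"
    and "(\<lambda>t. bms f w N x0 t i) \<longlonglongrightarrow> v"
    and "(\<lambda>t. bms f w N x0 t j) \<longlonglongrightarrow> u" and "u \<noteq> v"
  shows "(\<lambda>t. f (bms f w N x0 t i - bms f w N x0 t j)) \<longlonglongrightarrow> 0"
proof -
  define K where "K = (\<lambda>t. convex hull (bms f w N x0 t ` {..<N}))"
  have "\<forall>t. \<exists>\<alpha> q. \<alpha> \<in> {0..1} \<and> q \<in> K t
      \<and> bms f w N x0 (Suc t) i = \<alpha> *\<^sub>R bms f w N x0 t j + (1 - \<alpha>) *\<^sub>R q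
      \<and> f (bms f w N x0 t i - bms f w N x0 t j) * w j \<le> \<alpha> * sum w {..<N}"
    unfolding K_def by (metis bms_Suc_split_off[OF assms(1-4)])
  then obtain \<alpha> q where \<alpha>: "\<And>t. \<alpha> t \<in> {0..1}" and q: "\<And>t. q t \<in> K t"
    and step: "\<And>t. bms f w N x0 (Suc t) i = \<alpha> t *\<^sub>R bms f w N x0 t j + (1 - \<alpha> t) *\<^sub>R q t"
    and bound: "\<And>t. f (bms f w N x0 t i - bms f w N x0 t j) * w j \<le> \<alpha> t * sum w {..<N}"
    by metis
  have "\<alpha> \<longlonglongrightarrow> 0"
  proof (rule convex_combination_weight_tendsto_zero[OF _ _ _ _ assms(7,8) q \<alpha>])
    show "decseq K" "\<And>t. compact (K t)"
      using decseq_bms_convex_hull[OF assms(1,2)] by (simp_all add: K_def compact_convex_hull finite_imp_compact)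
    show "v extreme_point_of (\<Inter>t. K t)" "\<And>t. bms f w N x0 t j \<in> K t"
      using assms(4,5) by (simp_all add: K_def hull_inc)
    show "(\<lambda>t. \<alpha> t *\<^sub>R bms f w N x0 t j + (1 - \<alpha> t) *\<^sub>R q t) \<longlonglongrightarrow> v"
      using LIMSEQ_Suc[OF assms(6)] by (simp only: step)
  qed
  then have majorant_lim: "(\<lambda>t. \<alpha> t * sum w {..<N} / w j) \<longlonglongrightarrow> 0"
    by (intro tendsto_divide_zero tendsto_mult_left_zero)
  have majorant: "norm (f (bms f w N x0 t i - bms f w N x0 t j)) \<le> \<alpha> t * sum w {..<N} / w j" for t
    using bound[of t] assms(1,2,4) by (simp add: PDD_nonneg pos_le_divide_eq)
  show ?thesis
    using always_eventually[OF allI[OF majorant]] majorant_lim by (rule Lim_null_comparison)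
qed

end
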